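(* Consider any game $((I,\mu),s,N',N)$ in which, for every permitted group size $N'\le n\le N$, the restricted surplus function $s_n=s|_{\mathcal{G}_n}$ is continuous on $\mathcal{G}_n$, and the duality relation $$\sup_{\tau\in\mathrm{T}}\sum_{n=N'}^N\int_{\mathcal{G}_n}s_n\,d\tau_n=\inf_{u\in\mathcal{U}}\int_I u\,d\mu,\qquad \mathcal{U}=\{u\in L^1(I,\mu):\textstyle\sum_{i\in G}u(i)\ge s(G),\ \forall G\in\mathcal{G}\}.$$ Any maximizer $\tau$ of the left-hand side is a stable assignment, and a continuous minimizer $u$ of the right-hand side gives a corresponding imputation. Conversely, any stable assignment $\tau$ solves the maximization problem, and any imputation $u$ associated with this stable assignment solves the minimization problem.
   Context: $I$ is a compact metric space of player types and $\mu$ is a non-negative finite Borel measure on $I$. $N\ge 2$ and $N'\le N$ are natural numbers. For $N'\le n\le N$, $\mathcal{G}_n$ is the set of multisets of cardinality $n$ with elements in $I$, identified with the quotient $I^n/\sim_n$ of $I^n$ by coordinate permutations (with its quotient metric), written $G=[i_1,\dots,i_n]$; $\mathcal{G}=\bigcup_{n=N'}^N\mathcal{G}_n$. $s$ is a non-negative function on $\mathcal{G}$ and $s_n=s|_{\mathcal{G}_n}$. For measurable $A\subset I$, $\mathcal{G}_n(A,k)$ is the set of $n$-person groups with exactly $k$ members whose types lie in $A$. $\mathrm{T}$ is the set of assignments: tuples $\tau=(\tau_{N'},\dots,\tau_N)$ of non-negative measures $\tau_n$ on $\mathcal{G}_n$ with $\sum_{n=N'}^N\sum_{k=0}^n k\,\tau_n(\mathcal{G}_n(A,k))=\mu(A)$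 for every measurable $A\subset I$. $\sum_{i\in G}u(i)$ means $\sum_{i\in I}G(i)u(i)$. An assignment $\tau$ is stable with imputation $u\in L^1(I,\mu)$ if (feasibility) $\sum_{i\in G}u(i)\le s(G)$ for all $G\in\mathrm{supp}(\tau)=\bigcup_n\mathrm{supp}(\tau_n)$ and (no-blocking) $\sum_{i\in G}u(i)\ge s(G)$ for all $G\in\mathcal{G}$. *)

theory Defs
  imports "HOL-Analysis.Analysis" "HOL-Probability.Probability" "HOL-Library.Multiset"
begin

definition Gn :: "'a set \<Rightarrow> nat \<Rightarrow> 'a multiset set" where
  "Gn I n = {G. size G = n \<and> set_mset G \<subseteq> I}"

definition Gall :: "'a set \<Rightarrow> nat \<Rightarrow> nat \<Rightarrow> 'a multiset set" where
  "Gall I N' N = (\<Union>n\<in>{N'..N}. Gn I n)"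

definition Gnk :: "'a set \<Rightarrow> nat \<Rightarrow> 'a set \<Rightarrow> nat \<Rightarrow> 'a multiset set" where
  "Gnk I n A k = {G \<in> Gn I n. size (filter_mset (\<lambda>i. i \<in> A) G) = k}"

definition tuple_top :: "'a::metric_space set \<Rightarrow> nat \<Rightarrow> (nat \<Rightarrow> 'a) topology" where
  "tuple_top I n = product_topology (\<lambda>_. top_of_set I) {..<n}"

definition tuple_mset :: "nat \<Rightarrow> (nat \<Rightarrow> 'a) \<Rightarrow> 'a multiset" where
  "tuple_mset n x = image_mset x (mset_set {..<n})"

text \<open>Quotient topology on G_n = I^n / permutations (the topology of the quotient metric).\<close>
definition Gtop :: "'a::metric_space set \<Rightarrow> nat \<Rightarrow> 'a multiset topology" where
  "Gtop I n = topology (\<lambda>U. U \<subseteq> Gn I n \<and>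
      openin (tuple_top I n) {x \<in> topspace (tuple_top I n). tuple_mset n x \<in> U})"

definition borel_top :: "'b topology \<Rightarrow> 'b measure" where
  "borel_top X = sigma (topspace X) {U. openin X U}"

definition msupp :: "'b topology \<Rightarrow> 'b measure \<Rightarrow> 'b set" where
  "msupp X M = {x \<in> topspace X. \<forall>U. openin X U \<and> x \<in> U \<longrightarrow> emeasure M U > 0}"

definition assignments :: "'a::metric_space set \<Rightarrow> 'a measure \<Rightarrow> nat \<Rightarrow> nat
    \<Rightarrow> (nat \<Rightarrow> 'a multiset measure) set" where
  "assignments I \<mu> N' N = {\<tau>. (\<forall>n\<in>{N'..N}. sets (\<tau> n) = sets (borel_top (Gtop I n))) \<and>
     (\<forall>A\<in>sets \<mu>. (\<Sum>n=N'..N. \<Sum>k=0..n. of_nat k * emeasure (\<tau> n) (Gnk I n A k)) = emeasure \<mu> A)}"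

definition surplus_value :: "('a multiset \<Rightarrow> real) \<Rightarrow> nat \<Rightarrow> nat \<Rightarrow> (nat \<Rightarrow> 'a multiset measure) \<Rightarrow> real" where
  "surplus_value s N' N \<tau> = (\<Sum>n=N'..N. \<integral>G. s G \<partial>(\<tau> n))"

definition gsum :: "('a \<Rightarrow> real) \<Rightarrow> 'a multiset \<Rightarrow> real" where
  "gsum u G = sum_mset (image_mset u G)"

definition dual_set :: "'a::metric_space set \<Rightarrow> 'a measure \<Rightarrow> ('a multiset \<Rightarrow> real) \<Rightarrow> nat \<Rightarrow> nat
    \<Rightarrow> ('a \<Rightarrow> real) set" where
  "dual_set I \<mu> s N' N = {u. integrable \<mu> u \<and> (\<forall>G\<in>Gall I N' N. gsum u G \<ge> s G)}"

definition stable :: "'a::metric_space set \<Rightarrow> 'a measure \<Rightarrow> ('a multiset \<Rightarrow> real) \<Rightarrow> nat \<Rightarrow> nat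
    \<Rightarrow> (nat \<Rightarrow> 'a multiset measure) \<Rightarrow> ('a \<Rightarrow> real) \<Rightarrow> bool" where
  "stable I \<mu> s N' N \<tau> u \<longleftrightarrow> \<tau> \<in> assignments I \<mu> N' N \<and> integrable \<mu> u \<and>
     (\<forall>n\<in>{N'..N}. \<forall>G\<in>msupp (Gtop I n) (\<tau> n). gsum u G \<le> s G) \<and>
     (\<forall>G\<in>Gall I N' N. gsum u G \<ge> s G)"

end

(*
  Integrating the no-blocking inequality s <= gsum u against an assignment tau and using
  the change of variables  \<integral> u d\<mu> = \<Sum>n \<integral> gsum u d\<tau>_n  (the defining
  identity of assignments, extended from indicators to integrable u) expresses the duality gap
  \<integral> u d\<mu> - surplus(\<tau>) as  \<Sum>n \<integral> (gsum u - s) d\<tau>_n,  a sum of integrals of non-negative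
  functions. Under the duality hypothesis an optimal pair has zero gap, so gsum u = s holds
  \<tau>_n-almost everywhere; if u is continuous so is gsum u - s, and it then vanishes on the whole
  support of \<tau>_n, which is feasibility. Conversely, for a stable pair gsum u = s on the
  support, and the support has full measure because G_n is a quotient of the compact metric
  space I^n, whose open sets are sigma-compact; so the gap is zero, and weak duality makes
  both \<tau> and u optimal.
*)
theory Submission
  imports Defs
begin

section \<open>The quotient topology on groups\<close>

lemma istopology_quotient:
  "istopology (\<lambda>U. U \<subseteq> S \<and> openin X {x \<in> topspace X. f x \<in> U})"
  unfolding istopology_def
proof (rule conjI; intro allI impI)
  fix U V assume "U \<subseteq> S \<and> openin X {x \<in> topspace X. f x \<in> U}"
    and "V \<subseteq> S \<and> openin X {x \<in> topspace X. f x \<in> V}"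
  then have "openin X ({x \<in> topspace X. f x \<in> U} \<inter> {x \<in> topspace X. f x \<in> V})"
    by blast
  moreover have "{x \<in> topspace X. f x \<in> U} \<inter> {x \<in> topspace X. f x \<in> V}
      = {x \<in> topspace X. f x \<in> U \<inter> V}" by blast
  ultimately show "U \<inter> V \<subseteq> S \<and> openin X {x \<in> topspace X. f x \<in> U \<inter> V}"
    using \<open>U \<subseteq> S \<and> _\<close> by auto
next
  fix K assume K: "\<forall>U\<in>K. U \<subseteq> S \<and> openin X {x \<in> topspace X. f x \<in> U}"
  then have "openin X (\<Union>U\<in>K. {x \<in> topspace X. f x \<in> U})"
    by blast
  moreover have "(\<Union>U\<in>K. {x \<in> topspace X. f x \<in> U}) = {x \<in> topspace X. f x \<in> \<Union>K}"
    by blast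
  ultimately show "\<Union>K \<subseteq> S \<and> openin X {x \<in> topspace X. f x \<in> \<Union>K}"
    using K by auto
qed

lemma quotient_map_quotient_topology:
  assumes "f ` topspace X = S"
  shows "quotient_map X (topology (\<lambda>U. U \<subseteq> S \<and> openin X {x \<in> topspace X. f x \<in> U})) f"
proof -
  let ?Y = "topology (\<lambda>U. U \<subseteq> S \<and> openin X {x \<in> topspace X. f x \<in> U})"
  have openin_Y: "openin ?Y U \<longleftrightarrow> U \<subseteq> S \<and> openin X {x \<in> topspace X. f x \<in> U}" for U
    by (simp add: istopology_quotient)
  have "topspace ?Y = S"
  proof -
    have "{x \<in> topspace X. f x \<in> S} = topspace X" using assms by blast
    then have "openin ?Y S" by (simp add: openin_Y)
    then have "S \<subseteq> topspace ?Y" by (rule openin_subset)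
    moreover have "topspace ?Y \<subseteq> S" using openin_Y[of "topspace ?Y"] by simp
    ultimately show ?thesis by blast
  qed
  with assms show ?thesis
    unfolding quotient_map_def openin_Y by auto
qed

lemma topspace_tuple_top: "topspace (tuple_top I n) = (\<Pi>\<^sub>E j\<in>{..<n}. I)"
  unfolding tuple_top_def by simp

lemma continuous_map_tuple_top_component:
  "j < n \<Longrightarrow> continuous_map (tuple_top I n) (top_of_set I) (\<lambda>x. x j)"
  unfolding tuple_top_def by (intro continuous_map_product_projection) auto

lemma tuple_mset_image: "tuple_mset n ` (\<Pi>\<^sub>E j\<in>{..<n}. I) = Gn I n"
proof (intro equalityI subsetI)
  fix G assume "G \<in> tuple_mset n ` (\<Pi>\<^sub>E j\<in>{..<n}. I)"
  then obtain x where "x \<in> (\<Pi>\<^sub>E j\<in>{..<n}. I)" "G = tuple_mset n x" by blast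
  then show "G \<in> Gn I n" unfolding tuple_mset_def Gn_def by auto
next
  fix G assume G: "G \<in> Gn I n"
  obtain xs where xs: "mset xs = G" using ex_mset by blast
  have "length xs = n" "set xs \<subseteq> I" using G xs unfolding Gn_def by auto
  then have "restrict (nth xs) {..<n} \<in> (\<Pi>\<^sub>E j\<in>{..<n}. I)" by auto
  moreover have "tuple_mset n (restrict (nth xs) {..<n}) = G"
  proof -
    have "tuple_mset n (restrict (nth xs) {..<n}) = image_mset (nth xs) (mset_set {..<n})"
      unfolding tuple_mset_def by (intro image_mset_cong) auto
    also have "\<dots> = image_mset (nth xs) (mset [0..<n])"
      by (simp add: lessThan_atLeast0 mset_upt)
    also have "\<dots> = mset (map (nth xs) [0..<length xs])" using \<open>length xs = n\<close> by simp
    also have "\<dots> = G" using xs by (simp only: map_nth)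
    finally show ?thesis .
  qed
  ultimately show "G \<in> tuple_mset n ` (\<Pi>\<^sub>E j\<in>{..<n}. I)" by blast
qed

lemma tuple_mset_in_Gn: "x \<in> topspace (tuple_top I n) \<Longrightarrow> tuple_mset n x \<in> Gn I n"
  using tuple_mset_image[of n I] unfolding topspace_tuple_top by blast

lemma quotient_map_tuple_mset: "quotient_map (tuple_top I n) (Gtop I n) (tuple_mset n)"
  unfolding Gtop_def
  by (rule quotient_map_quotient_topology) (simp add: topspace_tuple_top tuple_mset_image)

lemma topspace_Gtop: "topspace (Gtop I n) = Gn I n"
proof -
  have "tuple_mset n ` topspace (tuple_top I n) = topspace (Gtop I n)"
    by (rule quotient_imp_surjective_map[OF quotient_map_tuple_mset])
  then show ?thesis by (simp add: topspace_tuple_top tuple_mset_image)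
qed

lemma openin_Gtop:
  assumes "U \<subseteq> Gn I n"
  shows "openin (Gtop I n) U \<longleftrightarrow>
    openin (tuple_top I n) {x \<in> topspace (tuple_top I n). tuple_mset n x \<in> U}"
  using quotient_map_tuple_mset[of I n] assms unfolding quotient_map_def topspace_Gtop by simp

lemma gsum_tuple_mset: "gsum u (tuple_mset n x) = (\<Sum>j<n. u (x j))"
  unfolding gsum_def tuple_mset_def
  by (simp add: sum_unfold_sum_mset image_mset.compositionality comp_def)

lemma continuous_map_gsum:
  assumes "continuous_on I u"
  shows "continuous_map (Gtop I n) euclideanreal (gsum u)"
proof -
  have u: "continuous_map (top_of_set I) euclideanreal u" using assms by simp
  have "continuous_map (tuple_top I n) euclideanreal (\<lambda>x. u (x j))" if "j < n" for j
    using continuous_map_compose[OF continuous_map_tuple_top_component[OF that] u]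
    by (simp add: comp_def)
  then have "continuous_map (tuple_top I n) euclideanreal (gsum u \<circ> tuple_mset n)"
    unfolding comp_def gsum_tuple_mset by (intro continuous_map_sum) auto
  then show ?thesis
    using continuous_compose_quotient_map_eq[OF quotient_map_tuple_mset] by blast
qed

section \<open>Borel measures on a topological space and their support\<close>

lemma space_borel_top: "space (borel_top X) = topspace X"
  unfolding borel_top_def by (rule space_measure_of) (auto dest: openin_subset)

lemma sets_borel_top: "sets (borel_top X) = sigma_sets (topspace X) {U. openin X U}"
  unfolding borel_top_def by (rule sets_measure_of) (auto dest: openin_subset)

lemma openin_in_sets_borel_top: "openin X U \<Longrightarrow> U \<in> sets (borel_top X)"
  by (simp add: sets_borel_top)

lemma borel_measurable_continuous_map:
  assumes "continuous_map X euclideanreal f"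
  shows "f \<in> borel_measurable (borel_top X)"
proof (rule borel_measurableI)
  fix S :: "real set" assume "open S"
  then have "openin X {x \<in> topspace X. f x \<in> S}"
    using openin_continuous_map_preimage[OF assms] by simp
  moreover have "f -` S \<inter> space (borel_top X) = {x \<in> topspace X. f x \<in> S}"
    by (auto simp: space_borel_top)
  ultimately show "f -` S \<inter> space (borel_top X) \<in> sets (borel_top X)"
    by (simp add: openin_in_sets_borel_top)
qed

lemma openin_complement_msupp: "openin X (topspace X - msupp X M)"
proof (rule openin_subopen[THEN iffD2], intro ballI)
  fix x assume "x \<in> topspace X - msupp X M"
  then obtain U where U: "openin X U" "x \<in> U" "emeasure M U = 0"
    unfolding msupp_def by auto
  have "y \<notin> msupp X M" if "y \<in> U" for y
    using U that unfolding msupp_def by auto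
  then have "U \<subseteq> topspace X - msupp X M"
    using openin_subset[OF U(1)] by blast
  with U show "\<exists>T. openin X T \<and> x \<in> T \<and> T \<subseteq> topspace X - msupp X M" by blast
qed

lemma AE_zero_imp_zero_on_msupp:
  assumes M: "sets M = sets (borel_top X)" and f: "continuous_map X euclideanreal f"
    and ae: "AE x in M. f x = 0" and x: "x \<in> msupp X M"
  shows "f x = 0"
proof (rule ccontr)
  assume "f x \<noteq> 0"
  let ?U = "{y \<in> topspace X. f y \<in> - {0}}"
  have U: "openin X ?U" by (rule openin_continuous_map_preimage[OF f]) auto
  moreover have "x \<in> ?U" using x \<open>f x \<noteq> 0\<close> by (simp add: msupp_def)
  ultimately have "emeasure M ?U > 0" using x unfolding msupp_def by blast
  moreover have "space M = topspace X"
    using sets_eq_imp_space_eq[OF M] by (simp add: space_borel_top)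
  then have "emeasure M ?U = 0"
    using ae U by (subst AE_iff_measurable[symmetric]) (auto simp: M openin_in_sets_borel_top)
  ultimately show False by simp
qed

lemma compactin_outside_msupp_null:
  assumes M: "sets M = sets (borel_top X)" and C: "compactin X C" "C \<inter> msupp X M = {}"
  obtains Z where "Z \<in> null_sets M" "C \<subseteq> Z"
proof -
  let ?\<U> = "{U. openin X U \<and> emeasure M U = 0}"
  have "x \<in> \<Union>?\<U>" if "x \<in> C" for x
  proof -
    have "x \<in> topspace X" "x \<notin> msupp X M"
      using that C compactin_subset_topspace by blast+
    then show ?thesis unfolding msupp_def by auto
  qed
  then have "C \<subseteq> \<Union>?\<U>" by blast
  then obtain \<F> where \<F>: "finite \<F>" "\<F> \<subseteq> ?\<U>" "C \<subseteq> \<Union>\<F>"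
    using C(1) unfolding compactin_def by (metis (no_types, lifting) mem_Collect_eq)
  have "\<Union>\<F> \<in> null_sets M"
    using \<F> by (intro null_sets.finite_Union) (auto simp: null_sets_def M openin_in_sets_borel_top)
  with \<F>(3) show thesis by (intro that)
qed

lemma AE_in_msupp:
  assumes M: "sets M = sets (borel_top X)"
    and K: "\<And>m::nat. compactin X (K m)" and cover: "topspace X - msupp X M = (\<Union>m. K m)"
  shows "AE x in M. x \<in> msupp X M"
proof -
  have "K m \<subseteq> topspace X - msupp X M" for m
    unfolding cover by (rule UN_upper[OF UNIV_I])
  then have "K m \<inter> msupp X M = {}" for m
    by blast
  then have "\<forall>m. \<exists>Z. Z \<in> null_sets M \<and> K m \<subseteq> Z"
    by (metis compactin_outside_msupp_null[OF M K])
  then obtain Z where Z: "\<And>m. Z m \<in> null_sets M" "\<And>m. K m \<subseteq> Z m"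
    by (metis choice)
  have "space M = topspace X"
    using sets_eq_imp_space_eq[OF M] by (simp add: space_borel_top)
  then have "{x \<in> space M. x \<notin> msupp X M} \<subseteq> (\<Union>m. Z m)"
    using cover Z(2) by blast
  with Z(1) show ?thesis by (intro AE_I'[of "\<Union>m. Z m"]) auto
qed

section \<open>Sigma-compactness of open sets of groups\<close>

lemma compact_space_tuple_top: "compact I \<Longrightarrow> compact_space (tuple_top I n)"
  unfolding tuple_top_def compact_space_product_topology
  by (simp add: compact_space_subtopology)

lemma continuous_map_tuple_top_dist_sum:
  "continuous_map (tuple_top I n) euclideanreal (\<lambda>x. \<Sum>j<n. dist (x j) (y j))"
proof (rule continuous_map_sum)
  fix j assume "j \<in> {..<n}"
  then have "continuous_map (tuple_top I n) (top_of_set I) (\<lambda>x. x j)"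
    by (simp add: continuous_map_tuple_top_component)
  moreover have "continuous_map (top_of_set I) euclideanreal (\<lambda>z. dist z (y j))"
    by (simp add: continuous_on_dist)
  ultimately show "continuous_map (tuple_top I n) euclideanreal (\<lambda>x. dist (x j) (y j))"
    by (rule continuous_map_compose[unfolded comp_def])
qed simp

lemma closedin_tuple_top_dist_sum_ge:
  "closedin (tuple_top I n)
    {x \<in> topspace (tuple_top I n). \<forall>y\<in>S. (\<Sum>j<n. dist (x j) (y j)) \<in> {c..}}"
proof -
  let ?X = "tuple_top I n"
  have "closedin ?X {x \<in> topspace ?X. (\<Sum>j<n. dist (x j) (y j)) \<in> {c..}}" for y
    by (intro closedin_continuous_map_preimage[OF continuous_map_tuple_top_dist_sum])
      (simp flip: closed_closedin)
  then have "closedin ?X (\<Inter>(insert (topspace ?X)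
      ((\<lambda>y. {x \<in> topspace ?X. (\<Sum>j<n. dist (x j) (y j)) \<in> {c..}}) ` S)))"
    by (intro closedin_Inter) auto
  moreover have "\<Inter>(insert (topspace ?X)
      ((\<lambda>y. {x \<in> topspace ?X. (\<Sum>j<n. dist (x j) (y j)) \<in> {c..}}) ` S))
    = {x \<in> topspace ?X. \<forall>y\<in>S. (\<Sum>j<n. dist (x j) (y j)) \<in> {c..}}"
    by auto
  ultimately show ?thesis by simp
qed

lemma openin_tuple_top_dist_sum:
  assumes W: "openin (tuple_top I n) W" and x: "x \<in> W"
  obtains e where "e > 0"
    "\<And>y. y \<in> topspace (tuple_top I n) \<Longrightarrow> (\<Sum>j<n. dist (x j) (y j)) < e \<Longrightarrow> y \<in> W"
proof -
  obtain X where X: "x \<in> (\<Pi>\<^sub>E j\<in>{..<n}. X j)" "\<And>j. openin (top_of_set I) (X j)"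
      "(\<Pi>\<^sub>E j\<in>{..<n}. X j) \<subseteq> W"
    using product_topology_open_contains_basis[OF W[unfolded tuple_top_def] x] by blast
  have "\<forall>j\<in>{..<n}. \<exists>e>0. \<forall>z\<in>I. dist z (x j) < e \<longrightarrow> z \<in> X j"
  proof
    fix j assume "j \<in> {..<n}"
    then have "x j \<in> X j" using X(1) by (simp add: PiE_iff)
    then show "\<exists>e>0. \<forall>z\<in>I. dist z (x j) < e \<longrightarrow> z \<in> X j"
      using X(2)[of j] unfolding openin_euclidean_subtopology_iff by blast
  qed
  then obtain r where "\<forall>j\<in>{..<n}. r j > 0 \<and> (\<forall>z\<in>I. dist z (x j) < r j \<longrightarrow> z \<in> X j)"
    by (rule bchoice[THEN exE])
  then have r: "\<And>j. j < n \<Longrightarrow> r j > 0 \<and> (\<forall>z\<in>I. dist z (x j) < r j \<longrightarrow> z \<in> X j)"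
    by blast
  define e where "e = Min (insert 1 (r ` {..<n}))"
  have "e > 0" unfolding e_def using r by (subst Min_gr_iff) auto
  moreover have "y \<in> W"
    if y: "y \<in> topspace (tuple_top I n)" "(\<Sum>j<n. dist (x j) (y j)) < e" for y
  proof -
    have "y j \<in> X j" if "j < n" for j
    proof -
      have "dist (x j) (y j) \<le> (\<Sum>j<n. dist (x j) (y j))"
        using that by (intro member_le_sum) auto
      moreover have "e \<le> r j" unfolding e_def using that by (intro Min_le) auto
      ultimately have "dist (y j) (x j) < r j" using y(2) by (simp add: dist_commute)
      moreover have "y j \<in> I" using y(1) that by (simp add: topspace_tuple_top PiE_iff)
      ultimately show ?thesis using r[OF that] by blast
    qed
    then have "y \<in> (\<Pi>\<^sub>E j\<in>{..<n}. X j)" using y(1) by (auto simp: topspace_tuple_top PiE_iff)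
    then show ?thesis using X(3) by blast
  qed
  ultimately show thesis by (rule that)
qed

lemma openin_tuple_top_sigma_compact:
  assumes I: "compact I" and W: "openin (tuple_top I n) W"
  obtains K where "\<And>m::nat. compactin (tuple_top I n) (K m)" "W = (\<Union>m. K m)"
proof -
  let ?X = "tuple_top I n"
  let ?P = "topspace (tuple_top I n)"
  define d where "d x y = (\<Sum>j<n. dist (x j) (y j))" for x y :: "nat \<Rightarrow> 'a"
  define K where "K m = {x \<in> ?P. \<forall>y \<in> ?P - W. d x y \<in> {1 / Suc m..}}" for m :: nat
  have "closedin ?X (K m)" for m
    unfolding K_def d_def by (rule closedin_tuple_top_dist_sum_ge)
  then have compact: "compactin ?X (K m)" for m
    by (rule closedin_compact_space[OF compact_space_tuple_top[OF I]])
  have "K m \<subseteq> W" for m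
  proof
    fix x assume x: "x \<in> K m"
    show "x \<in> W"
    proof (rule ccontr)
      assume "x \<notin> W"
      with x have "d x x \<in> {1 / Suc m..}" unfolding K_def by blast
      moreover have "d x x = 0" unfolding d_def by simp
      ultimately show False by simp
    qed
  qed
  moreover have "x \<in> (\<Union>m. K m)" if x: "x \<in> W" for x
  proof -
    obtain e where e: "e > 0" "\<And>y. y \<in> ?P \<Longrightarrow> d x y < e \<Longrightarrow> y \<in> W"
      unfolding d_def by (rule openin_tuple_top_dist_sum[OF W x]) blast
    obtain m where m: "1 / Suc m < e"
      using reals_Archimedean[OF e(1)] by (auto simp: inverse_eq_divide)
    have "x \<in> ?P" using W x openin_subset by blast
    moreover have "d x y \<in> {1 / Suc m..}" if "y \<in> ?P - W" for y
      using e(2)[of y] m that by force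
    ultimately have "x \<in> K m" unfolding K_def by blast
    then show ?thesis by blast
  qed
  ultimately have "W = (\<Union>m. K m)" by blast
  with compact show thesis by (rule that)
qed

lemma openin_Gtop_sigma_compact:
  assumes I: "compact I" and U: "openin (Gtop I n) U"
  obtains K where "\<And>m::nat. compactin (Gtop I n) (K m)" "U = (\<Union>m. K m)"
proof -
  let ?W = "{x \<in> topspace (tuple_top I n). tuple_mset n x \<in> U}"
  have q: "continuous_map (tuple_top I n) (Gtop I n) (tuple_mset n)"
    by (rule quotient_imp_continuous_map[OF quotient_map_tuple_mset])
  obtain K where K: "\<And>m::nat. compactin (tuple_top I n) (K m)" "?W = (\<Union>m. K m)"
    using openin_tuple_top_sigma_compact[OF I openin_continuous_map_preimage[OF q U]] by blast
  have "U \<subseteq> tuple_mset n ` topspace (tuple_top I n)"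
    using openin_subset[OF U] by (simp add: topspace_Gtop topspace_tuple_top tuple_mset_image)
  then have "U = tuple_mset n ` ?W" by blast
  then have "U = (\<Union>m. tuple_mset n ` K m)" using K(2) by blast
  moreover have "\<And>m. compactin (Gtop I n) (tuple_mset n ` K m)"
    using image_compactin[OF K(1) q] .
  ultimately show thesis by (intro that)
qed

lemma AE_in_msupp_Gtop:
  assumes "compact I" and "sets M = sets (borel_top (Gtop I n))"
  shows "AE G in M. G \<in> msupp (Gtop I n) M"
proof -
  obtain K where "\<And>m::nat. compactin (Gtop I n) (K m)"
    "topspace (Gtop I n) - msupp (Gtop I n) M = (\<Union>m. K m)"
    using openin_Gtop_sigma_compact[OF assms(1) openin_complement_msupp] by blast
  then show ?thesis by (rule AE_in_msupp[OF assms(2)])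
qed

section \<open>Counting the members of a group in a set\<close>

definition count_in :: "'a set \<Rightarrow> 'a multiset \<Rightarrow> nat" where
  "count_in A G = size (filter_mset (\<lambda>i. i \<in> A) G)"

lemma Gnk_eq_count_in: "Gnk I n A k = {G \<in> Gn I n. count_in A G = k}"
  unfolding Gnk_def count_in_def ..

lemma count_in_tuple_mset: "count_in A (tuple_mset n x) = card {j \<in> {..<n}. x j \<in> A}"
  unfolding count_in_def tuple_mset_def by (simp add: filter_mset_image_mset)

lemma count_in_le_size: "count_in A G \<le> size G"
  unfolding count_in_def by simp

lemma count_in_Compl: "count_in (- A) G = size G - count_in A G"
proof -
  have "size G = size ({#i \<in># G. i \<in> A#} + {#i \<in># G. i \<notin> A#})"
    by (rule arg_cong[where f = size], rule multiset_partition)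
  then have "size G = count_in A G + count_in (- A) G"
    by (simp only: count_in_def size_union Compl_iff)
  then show ?thesis by linarith
qed

lemma of_nat_count_in: "of_nat (count_in A G) = (\<Sum>x\<in>#G. indicator A x)"
  unfolding count_in_def by (induction G) (auto simp: indicator_def)

lemma sums_sum_mset:
  fixes f :: "nat \<Rightarrow> 'a \<Rightarrow> real"
  assumes "\<And>x. (\<lambda>i. f i x) sums g x"
  shows "(\<lambda>i. \<Sum>x\<in>#G. f i x) sums (\<Sum>x\<in>#G. g x)"
proof (induction G)
  case (add x G)
  then show ?case using sums_add[OF assms[of x]] by simp
qed simp

lemma openin_tuple_top_component_in:
  assumes "open V" and "j < n"
  shows "openin (tuple_top I n) {x \<in> topspace (tuple_top I n). x j \<in> V}"
proof -
  have "openin (tuple_top I n) {x \<in> topspace (tuple_top I n). x j \<in> I \<inter> V}"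
    using assms(1)
    by (intro openin_continuous_map_preimage[OF continuous_map_tuple_top_component[OF assms(2)]])
      (auto simp: openin_open)
  moreover have "{x \<in> topspace (tuple_top I n). x j \<in> I \<inter> V}
      = {x \<in> topspace (tuple_top I n). x j \<in> V}"
    using assms(2) by (auto simp: topspace_tuple_top)
  ultimately show ?thesis by simp
qed

lemma openin_tuple_top_card_ge:
  assumes "open V"
  shows "openin (tuple_top I n) {x \<in> topspace (tuple_top I n). k \<le> card {j \<in> {..<n}. x j \<in> V}}"
proof -
  let ?X = "tuple_top I n"
  let ?B = "\<lambda>J. \<Inter>(insert (topspace ?X) ((\<lambda>j. {x \<in> topspace ?X. x j \<in> V}) ` J))"
  have "{x \<in> topspace ?X. k \<le> card {j \<in> {..<n}. x j \<in> V}}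
      = (\<Union>J\<in>{J. J \<subseteq> {..<n} \<and> card J = k}. ?B J)" (is "_ = ?U")
  proof (intro equalityI subsetI)
    fix x assume x: "x \<in> {x \<in> topspace ?X. k \<le> card {j \<in> {..<n}. x j \<in> V}}"
    then obtain J where "J \<subseteq> {j \<in> {..<n}. x j \<in> V}" "card J = k"
      by (auto intro: obtain_subset_with_card_n)
    with x show "x \<in> ?U" by blast
  next
    fix x assume "x \<in> ?U"
    then obtain J where J: "J \<subseteq> {..<n}" "card J = k" "x \<in> topspace ?X" "\<forall>j\<in>J. x j \<in> V"
      by blast
    then have "card J \<le> card {j \<in> {..<n}. x j \<in> V}" by (intro card_mono) auto
    with J show "x \<in> {x \<in> topspace ?X. k \<le> card {j \<in> {..<n}. x j \<in> V}}" by simp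
  qed
  moreover have "openin ?X ?U"
  proof (rule openin_Union, clarify)
    fix J assume "J \<subseteq> {..<n}"
    then show "openin ?X (?B J)"
      using finite_subset[of J "{..<n}"]
      by (intro openin_Inter) (auto intro: openin_tuple_top_component_in[OF assms])
  qed
  ultimately show ?thesis by simp
qed

lemma openin_Gtop_count_in_ge:
  assumes "open V"
  shows "openin (Gtop I n) {G \<in> Gn I n. k \<le> count_in V G}"
proof (subst openin_Gtop)
  have "{x \<in> topspace (tuple_top I n). tuple_mset n x \<in> {G \<in> Gn I n. k \<le> count_in V G}}
      = {x \<in> topspace (tuple_top I n). k \<le> card {j \<in> {..<n}. x j \<in> V}}"
    by (auto simp: tuple_mset_in_Gn count_in_tuple_mset)
  then show "openin (tuple_top I n)
      {x \<in> topspace (tuple_top I n). tuple_mset n x \<in> {G \<in> Gn I n. k \<le> count_in V G}}"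
    using openin_tuple_top_card_ge[OF assms] by simp
qed auto

lemma borel_measurable_count_in_open:
  assumes "open V"
  shows "(\<lambda>G. real (count_in V G)) \<in> borel_measurable (borel_top (Gtop I n))"
proof -
  let ?U = "\<lambda>k. {G \<in> Gn I n. k \<le> count_in V G}"
  have "(\<lambda>G. \<Sum>k\<in>{1..n}. indicator (?U k) G :: real) \<in> borel_measurable (borel_top (Gtop I n))"
    using openin_Gtop_count_in_ge[OF assms]
    by (intro borel_measurable_sum borel_measurable_indicator openin_in_sets_borel_top)
  moreover have "(\<Sum>k\<in>{1..n}. indicator (?U k) G :: real) = real (count_in V G)"
    if "G \<in> space (borel_top (Gtop I n))" for G
  proof -
    have G: "G \<in> Gn I n" using that by (simp add: space_borel_top topspace_Gtop)
    then have "count_in V G \<le> n" using count_in_le_size[of V G] by (simp add: Gn_def)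
    then have "{1..n} \<inter> {k. k \<le> count_in V G} = {1..count_in V G}" by auto
    with G show ?thesis by (simp add: indicator_def sum.If_cases)
  qed
  ultimately show ?thesis by (simp cong: measurable_cong)
qed

lemma borel_measurable_count_in:
  assumes "B \<in> sets borel"
  shows "(\<lambda>G. real (count_in B G)) \<in> borel_measurable (borel_top (Gtop I n))"
proof -
  have "Int_stable {S :: 'a set. open S}" by (auto simp: Int_stable_def)
  moreover have "{S :: 'a set. open S} \<subseteq> Pow UNIV" by simp
  moreover have "B \<in> sigma_sets UNIV {S. open S}" using assms by (simp add: sets_borel)
  ultimately show ?thesis
  proof (induction rule: sigma_sets_induct_disjoint)
    case (basic A)
    then show ?case by (simp add: borel_measurable_count_in_open)
  next
    case empty
    then show ?case by (simp add: count_in_def)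
  next
    case (compl A)
    have "(\<lambda>G. real n - real (count_in A G)) \<in> borel_measurable (borel_top (Gtop I n))"
      using compl.IH by measurable
    moreover have "real n - real (count_in A G) = real (count_in (UNIV - A) G)"
      if "G \<in> space (borel_top (Gtop I n))" for G
      using that count_in_le_size[of A G]
      by (simp add: space_borel_top topspace_Gtop Gn_def count_in_Compl flip: Compl_eq_Diff_UNIV)
    ultimately show ?case by (simp cong: measurable_cong)
  next
    case (union A)
    have "\<And>i j. i \<noteq> j \<Longrightarrow> A i \<inter> A j = {}"
      using union.hyps(1) by (auto simp: disjoint_family_on_def)
    then have "(\<lambda>i. \<Sum>x\<in>#G. indicator (A i) x) sums (\<Sum>x\<in>#G. indicator (\<Union>i. A i) x :: real)" for G
      by (intro sums_sum_mset indicator_sums)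
    then have "(\<lambda>m. \<Sum>i<m. real (count_in (A i) G)) \<longlonglongrightarrow> real (count_in (\<Union>i. A i) G)" for G
      by (simp only: of_nat_count_in sums_def)
    moreover have
      "(\<lambda>G. \<Sum>i<m. real (count_in (A i) G)) \<in> borel_measurable (borel_top (Gtop I n))" for m
      using union.IH by (intro borel_measurable_sum) auto
    ultimately show ?case
      by (rule borel_measurable_LIMSEQ_real)
  qed
qed

section \<open>Change of variables along an assignment\<close>

lemma gsum_nonneg: "(\<And>x. 0 \<le> u x) \<Longrightarrow> 0 \<le> gsum u G"
  unfolding gsum_def by (induction G) auto

lemma gsum_diff: "gsum (\<lambda>x. u x - v x) G = gsum u G - gsum v G"
  unfolding gsum_def by (induction G) auto

lemma ennreal_gsum: "(\<And>x. 0 \<le> u x) \<Longrightarrow> ennreal (gsum u G) = (\<Sum>x\<in>#G. ennreal (u x))"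
  unfolding gsum_def by (induction G) (auto simp: ennreal_plus gsum_nonneg[unfolded gsum_def])

lemma sum_mset_SUP_ennreal:
  fixes U :: "nat \<Rightarrow> 'a \<Rightarrow> ennreal"
  assumes "incseq U"
  shows "(\<Sum>x\<in>#G. SUP i. U i x) = (SUP i. \<Sum>x\<in>#G. U i x)"
proof (induction G)
  case (add x G)
  have "incseq (\<lambda>i. U i x)" "incseq (\<lambda>i. \<Sum>x\<in>#G. U i x)"
    using assms by (auto simp: incseq_def le_fun_def intro!: sum_mset_mono)
  with add show ?case by (simp add: ennreal_SUP_add)
qed simp

lemma sets_assignment:
  "\<tau> \<in> assignments I \<mu> N' N \<Longrightarrow> n \<in> {N'..N} \<Longrightarrow> sets (\<tau> n) = sets (borel_top (Gtop I n))"
  unfolding assignments_def by blast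

lemma space_assignment:
  "\<tau> \<in> assignments I \<mu> N' N \<Longrightarrow> n \<in> {N'..N} \<Longrightarrow> space (\<tau> n) = Gn I n"
  using sets_eq_imp_space_eq[OF sets_assignment] by (simp add: space_borel_top topspace_Gtop)

lemma measurable_assignment:
  "\<tau> \<in> assignments I \<mu> N' N \<Longrightarrow> n \<in> {N'..N} \<Longrightarrow>
    measurable (\<tau> n) M = measurable (borel_top (Gtop I n)) M"
  by (rule measurable_cong_sets[OF sets_assignment refl])

locale population =
  fixes I :: "'a::metric_space set" and \<mu> :: "'a measure"
  assumes compact_types: "compact I"
    and space_population: "space \<mu> = I"
    and sets_population: "sets \<mu> = sets (restrict_space borel I)"
begin

lemma borel_measurable_count_in_sets:
  assumes "A \<in> sets \<mu>"
  shows "(\<lambda>G. real (count_in A G)) \<in> borel_measurable (borel_top (Gtop I n))"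
proof -
  obtain B where B: "B \<in> sets borel" "A = I \<inter> B"
    using assms by (auto simp: sets_population sets_restrict_space)
  have "count_in A G = count_in B G" if "G \<in> space (borel_top (Gtop I n))" for G
    using that unfolding count_in_def
    by (intro arg_cong[where f = size] filter_mset_cong)
      (auto simp: space_borel_top topspace_Gtop Gn_def B(2))
  with borel_measurable_count_in[OF B(1)] show ?thesis
    by (simp cong: measurable_cong)
qed

lemma borel_measurable_sum_mset:
  fixes f :: "'a \<Rightarrow> ennreal"
  assumes "f \<in> borel_measurable \<mu>"
  shows "(\<lambda>G. \<Sum>x\<in>#G. f x) \<in> borel_measurable (borel_top (Gtop I n))"
  using assms
proof (induction rule: borel_measurable_induct)
  case (cong f g)
  have "(\<Sum>x\<in>#G. f x) = (\<Sum>x\<in>#G. g x)" if "G \<in> space (borel_top (Gtop I n))" for G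
    using that cong.hyps(3)
    by (intro arg_cong[where f = sum_mset] image_mset_cong)
      (auto simp: space_borel_top topspace_Gtop Gn_def space_population)
  with cong.IH show ?case by (simp cong: measurable_cong)
next
  case (set A)
  have "(\<lambda>G. ennreal (real (count_in A G))) \<in> borel_measurable (borel_top (Gtop I n))"
    using borel_measurable_count_in_sets[OF set]
    by (rule measurable_compose[OF _ measurable_ennreal])
  then show ?case by (simp flip: of_nat_count_in add: ennreal_of_nat_eq_real_of_nat)
next
  case (mult u c)
  then show ?case
    by (simp flip: sum_mset_distrib_left add: borel_measurable_times_ennreal)
next
  case (add u v)
  then show ?case by (simp add: sum_mset.distrib)
next
  case (seq U)
  have "(\<lambda>G. \<Sum>x\<in>#G. (SUP i. U i) x) = (\<lambda>G. SUP i. \<Sum>x\<in>#G. U i x)"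
    using sum_mset_SUP_ennreal[OF \<open>incseq U\<close>] by (simp add: SUP_apply image_image)
  with seq.IH show ?case by simp
qed

lemma borel_measurable_sum_mset_assignment:
  fixes f :: "'a \<Rightarrow> ennreal"
  assumes "\<tau> \<in> assignments I \<mu> N' N" "n \<in> {N'..N}" "f \<in> borel_measurable \<mu>"
  shows "(\<lambda>G. \<Sum>x\<in>#G. f x) \<in> borel_measurable (\<tau> n)"
  using borel_measurable_sum_mset[OF assms(3)] by (simp add: measurable_assignment[OF assms(1,2)])

lemma nn_integral_count_in:
  assumes \<tau>: "\<tau> \<in> assignments I \<mu> N' N" and n: "n \<in> {N'..N}" and A: "A \<in> sets \<mu>"
  shows "(\<integral>\<^sup>+G. of_nat (count_in A G) \<partial>\<tau> n) = (\<Sum>k=0..n. of_nat k * emeasure (\<tau> n) (Gnk I n A k))"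
proof -
  have "Gnk I n A k = (\<lambda>G. real (count_in A G)) -` {real k} \<inter> space (\<tau> n)" for k
    by (auto simp: Gnk_eq_count_in space_assignment[OF \<tau> n])
  moreover have "(\<lambda>G. real (count_in A G)) \<in> borel_measurable (\<tau> n)"
    using borel_measurable_count_in_sets[OF A] by (simp add: measurable_assignment[OF \<tau> n])
  ultimately have Gnk: "Gnk I n A k \<in> sets (\<tau> n)" for k
    by (metis borel_singleton measurable_sets sets.empty_sets)
  have "of_nat (count_in A G) = (\<Sum>k=0..n. of_nat k * indicator (Gnk I n A k) G :: ennreal)"
    if "G \<in> space (\<tau> n)" for G
  proof -
    have "G \<in> Gn I n" using that by (simp add: space_assignment[OF \<tau> n])
    moreover from this have "count_in A G \<le> n"
      using count_in_le_size[of A G] by (simp add: Gn_def)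
    ultimately show ?thesis
      by (simp add: Gnk_eq_count_in indicator_def if_distrib sum.If_cases)
  qed
  then have "(\<integral>\<^sup>+G. of_nat (count_in A G) \<partial>\<tau> n)
      = (\<integral>\<^sup>+G. (\<Sum>k=0..n. of_nat k * indicator (Gnk I n A k) G) \<partial>\<tau> n)"
    by (rule nn_integral_cong)
  also have "\<dots> = (\<Sum>k=0..n. \<integral>\<^sup>+G. of_nat k * indicator (Gnk I n A k) G \<partial>\<tau> n)"
    using Gnk by (intro nn_integral_sum) auto
  also have "\<dots> = (\<Sum>k=0..n. of_nat k * emeasure (\<tau> n) (Gnk I n A k))"
    using Gnk by (intro sum.cong refl nn_integral_cmult_indicator)
  finally show ?thesis .
qed

lemma nn_integral_sum_mset_SUP:
  fixes U :: "nat \<Rightarrow> 'a \<Rightarrow> ennreal"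
  assumes \<tau>: "\<tau> \<in> assignments I \<mu> N' N"
    and U: "\<And>i. U i \<in> borel_measurable \<mu>" and "incseq U"
  shows "(SUP i. \<Sum>n=N'..N. \<integral>\<^sup>+G. (\<Sum>x\<in>#G. U i x) \<partial>\<tau> n)
    = (\<Sum>n=N'..N. \<integral>\<^sup>+G. (\<Sum>x\<in>#G. (SUP i. U i) x) \<partial>\<tau> n)"
proof -
  have incseq_sum: "incseq (\<lambda>i. \<Sum>x\<in>#G. U i x)" for G
    using \<open>incseq U\<close> by (auto simp: incseq_def le_fun_def intro!: sum_mset_mono)
  then have incseq_integral: "incseq (\<lambda>i. \<integral>\<^sup>+G. (\<Sum>x\<in>#G. U i x) \<partial>\<tau> n)" for n
    by (auto simp: incseq_def intro!: nn_integral_mono)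
  have "(SUP i. \<Sum>n=N'..N. \<integral>\<^sup>+G. (\<Sum>x\<in>#G. U i x) \<partial>\<tau> n)
      = (\<Sum>n=N'..N. SUP i. \<integral>\<^sup>+G. (\<Sum>x\<in>#G. U i x) \<partial>\<tau> n)"
    using incseq_integral by (rule ennreal_SUP_sum)
  also have "\<dots> = (\<Sum>n=N'..N. \<integral>\<^sup>+G. (SUP i. \<Sum>x\<in>#G. U i x) \<partial>\<tau> n)"
    using incseq_sum borel_measurable_sum_mset_assignment[OF \<tau> _ U]
    by (intro sum.cong refl nn_integral_monotone_convergence_SUP[symmetric])
      (auto simp: incseq_def le_fun_def)
  also have "\<dots> = (\<Sum>n=N'..N. \<integral>\<^sup>+G. (\<Sum>x\<in>#G. (SUP i. U i) x) \<partial>\<tau> n)"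
    using sum_mset_SUP_ennreal[OF \<open>incseq U\<close>] by (simp add: SUP_apply image_image)
  finally show ?thesis .
qed

lemma nn_integral_assignment:
  assumes \<tau>: "\<tau> \<in> assignments I \<mu> N' N" and f: "f \<in> borel_measurable \<mu>"
  shows "(\<integral>\<^sup>+x. f x \<partial>\<mu>) = (\<Sum>n=N'..N. \<integral>\<^sup>+G. (\<Sum>x\<in>#G. f x) \<partial>\<tau> n)"
  using f
proof (induction rule: borel_measurable_induct)
  case (cong f g)
  have "(\<Sum>x\<in>#G. f x) = (\<Sum>x\<in>#G. g x)" if "n \<in> {N'..N}" "G \<in> space (\<tau> n)" for n G
    using that cong.hyps(3)
    by (intro arg_cong[where f = sum_mset] image_mset_cong)
      (auto simp: space_assignment[OF \<tau>] Gn_def space_population)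
  then have "(\<Sum>n=N'..N. \<integral>\<^sup>+G. (\<Sum>x\<in>#G. g x) \<partial>\<tau> n) = (\<Sum>n=N'..N. \<integral>\<^sup>+G. (\<Sum>x\<in>#G. f x) \<partial>\<tau> n)"
    by (intro sum.cong refl nn_integral_cong) simp
  moreover have "(\<integral>\<^sup>+x. f x \<partial>\<mu>) = (\<integral>\<^sup>+x. g x \<partial>\<mu>)"
    using cong.hyps(3) by (rule nn_integral_cong)
  ultimately show ?case using cong.IH by simp
next
  case (set A)
  have "(\<integral>\<^sup>+x. indicator A x \<partial>\<mu>) = (\<Sum>n=N'..N. \<Sum>k=0..n. of_nat k * emeasure (\<tau> n) (Gnk I n A k))"
    using \<tau> set unfolding assignments_def by simp
  also have "\<dots> = (\<Sum>n=N'..N. \<integral>\<^sup>+G. of_nat (count_in A G) \<partial>\<tau> n)"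
    using nn_integral_count_in[OF \<tau> _ set] by simp
  finally show ?case by (simp add: of_nat_count_in)
next
  case (mult u c)
  have "(\<integral>\<^sup>+x. c * u x \<partial>\<mu>) = (\<Sum>n=N'..N. c * \<integral>\<^sup>+G. (\<Sum>x\<in>#G. u x) \<partial>\<tau> n)"
    using mult by (simp add: nn_integral_cmult sum_distrib_left)
  also have "\<dots> = (\<Sum>n=N'..N. \<integral>\<^sup>+G. (\<Sum>x\<in>#G. c * u x) \<partial>\<tau> n)"
    using borel_measurable_sum_mset_assignment[OF \<tau> _ mult.hyps(2)]
    by (intro sum.cong refl) (simp add: nn_integral_cmult flip: sum_mset_distrib_left)
  finally show ?case .
next
  case (add u v)
  have "(\<integral>\<^sup>+x. v x + u x \<partial>\<mu>)
      = (\<Sum>n=N'..N. \<integral>\<^sup>+G. (\<Sum>x\<in>#G. v x) \<partial>\<tau> n) + (\<Sum>n=N'..N. \<integral>\<^sup>+G. (\<Sum>x\<in>#G. u x) \<partial>\<tau> n)"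
    using add by (simp add: nn_integral_add)
  also have "\<dots> = (\<Sum>n=N'..N. \<integral>\<^sup>+G. (\<Sum>x\<in>#G. v x + u x) \<partial>\<tau> n)"
    using borel_measurable_sum_mset_assignment[OF \<tau> _ add.hyps(1)]
      borel_measurable_sum_mset_assignment[OF \<tau> _ add.hyps(3)]
    by (simp add: sum.distrib[symmetric] nn_integral_add sum_mset.distrib)
  finally show ?case .
next
  case (seq U)
  have "(\<integral>\<^sup>+x. (SUP i. U i) x \<partial>\<mu>) = (SUP i. \<integral>\<^sup>+x. U i x \<partial>\<mu>)"
    using seq by (simp add: SUP_apply image_image nn_integral_monotone_convergence_SUP)
  with seq.IH nn_integral_sum_mset_SUP[OF \<tau> seq.hyps(1) \<open>incseq U\<close>] show ?case
    by simp
qed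

lemma integral_assignment_nonneg:
  assumes \<tau>: "\<tau> \<in> assignments I \<mu> N' N" and u: "integrable \<mu> u" and nonneg: "\<And>x. 0 \<le> u x"
  shows "\<forall>n\<in>{N'..N}. integrable (\<tau> n) (gsum u)"
    and "(\<integral>x. u x \<partial>\<mu>) = (\<Sum>n=N'..N. \<integral>G. gsum u G \<partial>\<tau> n)"
proof -
  have ennreal_u: "(\<lambda>x. ennreal (u x)) \<in> borel_measurable \<mu>" using u by simp
  have meas: "gsum u \<in> borel_measurable (\<tau> n)" if n: "n \<in> {N'..N}" for n
  proof -
    have "(\<lambda>G. enn2real (\<Sum>x\<in>#G. ennreal (u x))) \<in> borel_measurable (\<tau> n)"
      using borel_measurable_sum_mset_assignment[OF \<tau> n ennreal_u] by simp
    then show ?thesis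
      by (simp flip: ennreal_gsum[OF nonneg] add: gsum_nonneg[OF nonneg])
  qed
  have "ennreal (\<integral>x. u x \<partial>\<mu>) = (\<integral>\<^sup>+x. ennreal (u x) \<partial>\<mu>)"
    using u nonneg by (simp add: nn_integral_eq_integral)
  also have "\<dots> = (\<Sum>n=N'..N. \<integral>\<^sup>+G. ennreal (gsum u G) \<partial>\<tau> n)"
    using nn_integral_assignment[OF \<tau> ennreal_u] by (simp add: ennreal_gsum[OF nonneg])
  finally have sum: "ennreal (\<integral>x. u x \<partial>\<mu>) = (\<Sum>n=N'..N. \<integral>\<^sup>+G. ennreal (gsum u G) \<partial>\<tau> n)" .
  have int: "integrable (\<tau> n) (gsum u)" if n: "n \<in> {N'..N}" for n
  proof (rule integrableI_nonneg[OF meas[OF n]])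
    show "AE G in \<tau> n. 0 \<le> gsum u G" by (simp add: gsum_nonneg[OF nonneg])
    have "(\<integral>\<^sup>+G. ennreal (gsum u G) \<partial>\<tau> n) \<le> (\<Sum>n=N'..N. \<integral>\<^sup>+G. ennreal (gsum u G) \<partial>\<tau> n)"
      using n by (intro member_le_sum) auto
    also have "\<dots> < \<infinity>" using sum[symmetric] by simp
    finally show "(\<integral>\<^sup>+G. ennreal (gsum u G) \<partial>\<tau> n) < \<infinity>" .
  qed
  then show "\<forall>n\<in>{N'..N}. integrable (\<tau> n) (gsum u)" by blast
  have "ennreal (\<integral>x. u x \<partial>\<mu>) = ennreal (\<Sum>n=N'..N. \<integral>G. gsum u G \<partial>\<tau> n)"
    unfolding sum using int
    by (simp add: nn_integral_eq_integral gsum_nonneg[OF nonneg] integral_nonneg sum_nonneg)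
  then show "(\<integral>x. u x \<partial>\<mu>) = (\<Sum>n=N'..N. \<integral>G. gsum u G \<partial>\<tau> n)"
    by (simp add: integral_nonneg nonneg gsum_nonneg sum_nonneg)
qed

lemma integral_assignment:
  assumes \<tau>: "\<tau> \<in> assignments I \<mu> N' N" and u: "integrable \<mu> u"
  shows "\<forall>n\<in>{N'..N}. integrable (\<tau> n) (gsum u)"
    and "(\<integral>x. u x \<partial>\<mu>) = (\<Sum>n=N'..N. \<integral>G. gsum u G \<partial>\<tau> n)"
proof -
  let ?p = "\<lambda>x. max 0 (u x)" and ?m = "\<lambda>x. max 0 (- u x)"
  have split: "u = (\<lambda>x. ?p x - ?m x)" by (auto simp: max_def)
  have gsum_split: "gsum u = (\<lambda>G. gsum ?p G - gsum ?m G)"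
    by (subst split) (rule ext, rule gsum_diff)
  have p: "integrable \<mu> ?p" and m: "integrable \<mu> ?m" using u by auto
  note P = integral_assignment_nonneg[OF \<tau> p] and M = integral_assignment_nonneg[OF \<tau> m]
  show "\<forall>n\<in>{N'..N}. integrable (\<tau> n) (gsum u)"
    using P(1) M(1) unfolding gsum_split by auto
  have "(\<integral>x. u x \<partial>\<mu>) = (\<integral>x. ?p x \<partial>\<mu>) - (\<integral>x. ?m x \<partial>\<mu>)"
    using p m by (subst split) (rule Bochner_Integration.integral_diff)
  also have "\<dots> = (\<Sum>n=N'..N. (\<integral>G. gsum ?p G \<partial>\<tau> n) - (\<integral>G. gsum ?m G \<partial>\<tau> n))"
    using P(2) M(2) by (simp add: sum_subtractf)
  also have "\<dots> = (\<Sum>n=N'..N. \<integral>G. gsum u G \<partial>\<tau> n)"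
    using P(1) M(1) by (simp add: gsum_split)
  finally show "(\<integral>x. u x \<partial>\<mu>) = (\<Sum>n=N'..N. \<integral>G. gsum u G \<partial>\<tau> n)" .
qed

end

section \<open>Duality\<close>

lemma Gn_subset_Gall: "n \<in> {N'..N} \<Longrightarrow> Gn I n \<subseteq> Gall I N' N"
  unfolding Gall_def by blast

locale game = population I \<mu>
  for I :: "'a::metric_space set" and \<mu> :: "'a measure" +
  fixes s :: "'a multiset \<Rightarrow> real" and N' N :: nat
  assumes surplus_nonneg: "\<forall>G\<in>Gall I N' N. s G \<ge> 0"
    and surplus_continuous: "\<forall>n\<in>{N'..N}. continuous_map (Gtop I n) euclideanreal s"
begin

lemma surplus_nonneg_le_gsum:
  assumes \<tau>: "\<tau> \<in> assignments I \<mu> N' N" and u: "u \<in> dual_set I \<mu> s N' N"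
    and n: "n \<in> {N'..N}" and G: "G \<in> space (\<tau> n)"
  shows "0 \<le> s G" and "s G \<le> gsum u G"
proof -
  have "G \<in> Gall I N' N" using G Gn_subset_Gall[OF n] by (auto simp: space_assignment[OF \<tau> n])
  then show "0 \<le> s G" "s G \<le> gsum u G" using surplus_nonneg u by (auto simp: dual_set_def)
qed

lemma integrable_surplus:
  assumes \<tau>: "\<tau> \<in> assignments I \<mu> N' N" and u: "u \<in> dual_set I \<mu> s N' N" and n: "n \<in> {N'..N}"
  shows "integrable (\<tau> n) s"
proof (rule Bochner_Integration.integrable_bound)
  show "integrable (\<tau> n) (gsum u)"
    using integral_assignment(1)[OF \<tau>] u n by (auto simp: dual_set_def)
  show "s \<in> borel_measurable (\<tau> n)"
    unfolding measurable_assignment[OF \<tau> n]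
    using surplus_continuous n by (intro borel_measurable_continuous_map) blast
  show "AE G in \<tau> n. norm (s G) \<le> norm (gsum u G)"
    using surplus_nonneg_le_gsum[OF \<tau> u n] by (intro AE_I2) force
qed

lemma duality_gap:
  assumes \<tau>: "\<tau> \<in> assignments I \<mu> N' N" and u: "u \<in> dual_set I \<mu> s N' N"
  shows "(\<integral>i. u i \<partial>\<mu>) - surplus_value s N' N \<tau> = (\<Sum>n=N'..N. \<integral>G. gsum u G - s G \<partial>\<tau> n)"
    and "n \<in> {N'..N} \<Longrightarrow> integrable (\<tau> n) (\<lambda>G. gsum u G - s G)"
    and "n \<in> {N'..N} \<Longrightarrow> 0 \<le> (\<integral>G. gsum u G - s G \<partial>\<tau> n)"
proof -
  have ui: "integrable \<mu> u" using u by (simp add: dual_set_def)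
  note gsum = integral_assignment[OF \<tau> ui]
  show "integrable (\<tau> n) (\<lambda>G. gsum u G - s G)" if "n \<in> {N'..N}"
    using gsum(1) integrable_surplus[OF \<tau> u] that by auto
  show "(\<integral>i. u i \<partial>\<mu>) - surplus_value s N' N \<tau> = (\<Sum>n=N'..N. \<integral>G. gsum u G - s G \<partial>\<tau> n)"
    using gsum integrable_surplus[OF \<tau> u]
    by (simp add: surplus_value_def sum_subtractf)
  show "0 \<le> (\<integral>G. gsum u G - s G \<partial>\<tau> n)" if "n \<in> {N'..N}"
    using surplus_nonneg_le_gsum(2)[OF \<tau> u that] by (intro integral_nonneg_AE AE_I2) simp
qed

lemma weak_duality:
  assumes "\<tau> \<in> assignments I \<mu> N' N" and "u \<in> dual_set I \<mu> s N' N"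
  shows "surplus_value s N' N \<tau> \<le> (\<integral>i. u i \<partial>\<mu>)"
proof -
  have "0 \<le> (\<Sum>n=N'..N. \<integral>G. gsum u G - s G \<partial>\<tau> n)"
    using duality_gap(3)[OF assms] by (rule sum_nonneg)
  with duality_gap(1)[OF assms] show ?thesis by linarith
qed

lemma stable_if_no_gap:
  assumes \<tau>: "\<tau> \<in> assignments I \<mu> N' N" and u: "u \<in> dual_set I \<mu> s N' N"
    and u_continuous: "continuous_on I u" and no_gap: "surplus_value s N' N \<tau> = (\<integral>i. u i \<partial>\<mu>)"
  shows "stable I \<mu> s N' N \<tau> u"
proof -
  have "(\<Sum>n=N'..N. \<integral>G. gsum u G - s G \<partial>\<tau> n) = 0"
    using duality_gap(1)[OF \<tau> u] no_gap by simp
  then have zero: "\<forall>n\<in>{N'..N}. (\<integral>G. gsum u G - s G \<partial>\<tau> n) = 0"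
    using duality_gap(3)[OF \<tau> u] by (subst sum_nonneg_eq_0_iff[symmetric]) auto
  have "gsum u G \<le> s G" if n: "n \<in> {N'..N}" and G: "G \<in> msupp (Gtop I n) (\<tau> n)" for n G
  proof -
    have "AE G in \<tau> n. gsum u G - s G = 0"
      using zero n duality_gap(2)[OF \<tau> u n] surplus_nonneg_le_gsum(2)[OF \<tau> u n]
      by (subst integral_nonneg_eq_0_iff_AE[symmetric]) auto
    moreover have "continuous_map (Gtop I n) euclideanreal (\<lambda>G. gsum u G - s G)"
      using continuous_map_gsum[OF u_continuous] surplus_continuous n
      by (intro continuous_map_diff) auto
    ultimately show ?thesis
      using AE_zero_imp_zero_on_msupp[OF sets_assignment[OF \<tau> n]] G by fastforce
  qed
  with \<tau> u show ?thesis by (auto simp: stable_def dual_set_def)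
qed

lemma no_gap_if_stable:
  assumes "stable I \<mu> s N' N \<tau> u"
  shows "surplus_value s N' N \<tau> = (\<integral>i. u i \<partial>\<mu>)"
proof -
  have \<tau>: "\<tau> \<in> assignments I \<mu> N' N" and u: "u \<in> dual_set I \<mu> s N' N"
    using assms by (auto simp: stable_def dual_set_def)
  have "(\<integral>G. gsum u G - s G \<partial>\<tau> n) = 0" if n: "n \<in> {N'..N}" for n
  proof (rule integral_eq_zero_AE)
    show "AE G in \<tau> n. gsum u G - s G = 0"
      using AE_in_msupp_Gtop[OF compact_types sets_assignment[OF \<tau> n]]
    proof (rule AE_mp, intro AE_I2 impI)
      fix G assume "G \<in> space (\<tau> n)" "G \<in> msupp (Gtop I n) (\<tau> n)"
      then show "gsum u G - s G = 0"
        using assms surplus_nonneg_le_gsum(2)[OF \<tau> u n] n by (force simp: stable_def)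
    qed
  qed
  then show ?thesis using duality_gap(1)[OF \<tau> u] by simp
qed

lemma optimal_if_no_gap:
  assumes \<tau>: "\<tau> \<in> assignments I \<mu> N' N" and u: "u \<in> dual_set I \<mu> s N' N"
    and no_gap: "surplus_value s N' N \<tau> = (\<integral>i. u i \<partial>\<mu>)"
  shows "surplus_value s N' N \<tau> = Sup (surplus_value s N' N ` assignments I \<mu> N' N)"
    and "(\<integral>i. u i \<partial>\<mu>) = Inf ((\<lambda>u. \<integral>i. u i \<partial>\<mu>) ` dual_set I \<mu> s N' N)"
proof -
  have "Sup (surplus_value s N' N ` assignments I \<mu> N' N) = surplus_value s N' N \<tau>"
  proof (rule cSup_eq_maximum)
    show "surplus_value s N' N \<tau> \<in> surplus_value s N' N ` assignments I \<mu> N' N"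
      using \<tau> by (rule imageI)
    show "x \<le> surplus_value s N' N \<tau>" if "x \<in> surplus_value s N' N ` assignments I \<mu> N' N" for x
      using that weak_duality[OF _ u] no_gap by auto
  qed
  then show "surplus_value s N' N \<tau> = Sup (surplus_value s N' N ` assignments I \<mu> N' N)" ..
  have "Inf ((\<lambda>u. \<integral>i. u i \<partial>\<mu>) ` dual_set I \<mu> s N' N) = (\<integral>i. u i \<partial>\<mu>)"
  proof (rule cInf_eq_minimum)
    show "(\<integral>i. u i \<partial>\<mu>) \<in> (\<lambda>u. \<integral>i. u i \<partial>\<mu>) ` dual_set I \<mu> s N' N"
      using u by (rule imageI)
    show "(\<integral>i. u i \<partial>\<mu>) \<le> x" if "x \<in> (\<lambda>u. \<integral>i. u i \<partial>\<mu>) ` dual_set I \<mu> s N' N" for x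
      using that weak_duality[OF \<tau>] no_gap by auto
  qed
  then show "(\<integral>i. u i \<partial>\<mu>) = Inf ((\<lambda>u. \<integral>i. u i \<partial>\<mu>) ` dual_set I \<mu> s N' N)" ..
qed

end

theorem lemma8:
  fixes I :: "'a::metric_space set" and \<mu> :: "'a measure"
    and s :: "'a multiset \<Rightarrow> real" and N' N :: nat
  assumes "compact I"
    and "space \<mu> = I" and "sets \<mu> = sets (restrict_space borel I)" and "finite_measure \<mu>"
    and "2 \<le> N" and "1 \<le> N'" and "N' \<le> N"
    and "\<forall>G\<in>Gall I N' N. s G \<ge> 0"
    and "\<forall>n\<in>{N'..N}. continuous_map (Gtop I n) euclideanreal s"
    and duality: "Sup (surplus_value s N' N ` assignments I \<mu> N' N)
                  = Inf ((\<lambda>u. \<integral>i. u i \<partial>\<mu>) ` dual_set I \<mu> s N' N)"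
  shows "(\<forall>\<tau> u. \<tau> \<in> assignments I \<mu> N' N
             \<and> surplus_value s N' N \<tau> = Sup (surplus_value s N' N ` assignments I \<mu> N' N)
             \<and> u \<in> dual_set I \<mu> s N' N \<and> continuous_on I u
             \<and> (\<integral>i. u i \<partial>\<mu>) = Inf ((\<lambda>u. \<integral>i. u i \<partial>\<mu>) ` dual_set I \<mu> s N' N)
           \<longrightarrow> stable I \<mu> s N' N \<tau> u)
       \<and> (\<forall>\<tau> u. stable I \<mu> s N' N \<tau> u \<longrightarrow>
             surplus_value s N' N \<tau> = Sup (surplus_value s N' N ` assignments I \<mu> N' N)
             \<and> u \<in> dual_set I \<mu> s N' N
             \<and> (\<integral>i. u i \<partial>\<mu>) = Inf ((\<lambda>u. \<integral>i. u i \<partial>\<mu>) ` dual_set I \<mu> s N' N))"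
proof -
  interpret game I \<mu> s N' N
    using assms by unfold_locales auto
  have feasible: "\<tau> \<in> assignments I \<mu> N' N" "u \<in> dual_set I \<mu> s N' N"
    if "stable I \<mu> s N' N \<tau> u" for \<tau> u
    using that by (auto simp: stable_def dual_set_def)
  show ?thesis
  proof (intro conjI allI impI; (elim conjE)?)
    fix \<tau> u
    show "stable I \<mu> s N' N \<tau> u"
      if "\<tau> \<in> assignments I \<mu> N' N" "u \<in> dual_set I \<mu> s N' N" "continuous_on I u"
        "surplus_value s N' N \<tau> = Sup (surplus_value s N' N ` assignments I \<mu> N' N)"
        "(\<integral>i. u i \<partial>\<mu>) = Inf ((\<lambda>u. \<integral>i. u i \<partial>\<mu>) ` dual_set I \<mu> s N' N)"
      using that duality by (intro stable_if_no_gap) auto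
  qed (use feasible no_gap_if_stable optimal_if_no_gap in blast)+
qed

end
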